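(* Let $(X,\le)$ be a non-empty strictly inductive poset, $f:X\to X$ and $a_0\in X$, let $(a_k)_k$ be the transfinite sequence of iterates of $f$ from $a_0$, $A=\{a_k\mid k\text{ an ordinal}\}$, and let $N$ be the smallest subset of $X$ containing $a_0$, closed under $f$, and closed under non-empty least upper bounds. If the sequence $(a_k)_k$ is monotone (i.e. $a_k\le a_l$ whenever $k\le l$), then $N\subseteq A$.
   Context: A poset is strictly inductive if every non-empty chain has a least upper bound $\mathrm{lub}$ in $X$. The transfinite iterates are defined by $a_0$ given, $a_{k+1}=f(a_k)$, and $a_l=\mathrm{lub}\{a_k\mid k<l\}$ for limit ordinals $l$. A set $Z\subseteq X$ is closed under $f$ if $f(z)\in Z$ for all $z\in Z$, and closed under non-empty least upper bounds if for every non-empty $P\subseteq Z$, $\mathrm{lub}(P)$ exists and belongs to $Z$. *)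

theory Defs
  imports Main
begin

text \<open>The poset (X, \<le>) is the whole carrier of a type of class order (so X is non-empty).\<close>

definition is_lub :: "'a::order set \<Rightarrow> 'a \<Rightarrow> bool" where
  "is_lub P u \<longleftrightarrow> (\<forall>p\<in>P. p \<le> u) \<and> (\<forall>v. (\<forall>p\<in>P. p \<le> v) \<longrightarrow> u \<le> v)"

definition strictly_inductive :: "'a::order itself \<Rightarrow> bool" where
  "strictly_inductive _ \<longleftrightarrow>
     (\<forall>C::'a set. C \<noteq> {} \<and> Complete_Partial_Order.chain (\<le>) C \<longrightarrow> (\<exists>u. is_lub C u))"

definition closed_under_fun :: "('a \<Rightarrow> 'a) \<Rightarrow> 'a set \<Rightarrow> bool" where
  "closed_under_fun f Z \<longleftrightarrow> (\<forall>z\<in>Z. f z \<in> Z)"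

definition closed_under_lubs :: "'a::order set \<Rightarrow> bool" where
  "closed_under_lubs Z \<longleftrightarrow> (\<forall>P. P \<noteq> {} \<and> P \<subseteq> Z \<longrightarrow> (\<exists>u. is_lub P u \<and> u \<in> Z))"

definition is_successor_of :: "'i::wellorder \<Rightarrow> 'i \<Rightarrow> bool" where
  "is_successor_of k j \<longleftrightarrow> j < k \<and> (\<forall>m. j < m \<longrightarrow> k \<le> m)"

definition is_limit :: "'i::wellorder \<Rightarrow> bool" where
  "is_limit k \<longleftrightarrow> (\<exists>j. j < k) \<and> \<not> (\<exists>j. is_successor_of k j)"

definition transfinite_iterates ::
    "('a::order \<Rightarrow> 'a) \<Rightarrow> 'a \<Rightarrow> ('i::wellorder \<Rightarrow> 'a) \<Rightarrow> bool" where
  "transfinite_iterates f a0 a \<longleftrightarrow>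
     (\<forall>k. (\<forall>j. \<not> j < k) \<longrightarrow> a k = a0) \<and>
     (\<forall>k j. is_successor_of k j \<longrightarrow> a k = f (a j)) \<and>
     (\<forall>k. is_limit k \<longrightarrow> is_lub {a j | j. j < k} (a k))"

end

theory Submission
  imports Defs
begin

text \<open>Since the index type admits no injection into the poset, the iterates repeat: \<open>a k = a l\<close>
  for some \<open>k < l\<close>. By monotonicity the successor of \<open>k\<close> is squeezed between them, so \<open>a k\<close> is a
  fixed point of \<open>f\<close>, and a transfinite induction shows the sequence is constant from \<open>k\<close> on.
  Hence \<open>A\<close> is closed under \<open>f\<close>; it is also closed under least upper bounds, the lub of a
  non-empty \<open>P \<subseteq> A\<close> being \<open>a m\<close> for the least \<open>m\<close> with \<open>a m\<close> an upper bound of \<open>P\<close>.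
  Minimality of \<open>N\<close> then gives \<open>N \<subseteq> A\<close>.\<close>

lemma is_successor_of_Least:
  fixes j :: "'i::wellorder"
  assumes "j < m"
  shows "is_successor_of (LEAST x. j < x) j"
  unfolding is_successor_of_def using assms by (metis LeastI Least_le)

lemma wellorder_least_or_successor_or_limit:
  fixes m :: "'i::wellorder"
  obtains "\<forall>j. \<not> j < m" | j where "is_successor_of m j" | "is_limit m"
  unfolding is_limit_def by blast

lemma transfinite_iterates_least:
  assumes "transfinite_iterates f a0 a" and "\<forall>j. \<not> j < k"
  shows "a k = a0"
  using assms unfolding transfinite_iterates_def by blast

lemma transfinite_iterates_successor:
  assumes "transfinite_iterates f a0 a" and "is_successor_of k j"
  shows "a k = f (a j)"
  using assms unfolding transfinite_iterates_def by blast

lemma transfinite_iterates_limit: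
  assumes "transfinite_iterates f a0 a" and "is_limit k"
  shows "is_lub {a j | j. j < k} (a k)"
  using assms unfolding transfinite_iterates_def by blast

lemma transfinite_iterates_start_in_range:
  fixes a :: "'i::wellorder \<Rightarrow> 'a::order"
  assumes "transfinite_iterates f a0 a"
  shows "a0 \<in> range a"
proof -
  have "a (LEAST x. True) = a0"
    using assms by (rule transfinite_iterates_least) (simp add: Least_le leD)
  then show ?thesis by (metis rangeI)
qed

lemma is_lub_le:
  assumes "is_lub P u" and "\<forall>p\<in>P. p \<le> v"
  shows "u \<le> v"
  using assms unfolding is_lub_def by blast

lemma monotone_iterates_repeat_imp_fixpoint:
  fixes a :: "'i::wellorder \<Rightarrow> 'a::order"
  assumes iter: "transfinite_iterates f a0 a" and mono_a: "\<And>k l. k \<le> l \<Longrightarrow> a k \<le> a l"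
    and "k < l" and "a k = a l"
  shows "f (a k) = a k"
proof -
  define s where "s = (LEAST x. k < x)"
  have s: "is_successor_of s k"
    unfolding s_def using \<open>k < l\<close> by (rule is_successor_of_Least)
  then have "k \<le> s" and "s \<le> l"
    using \<open>k < l\<close> unfolding is_successor_of_def by auto
  then have "a s = a k"
    using mono_a \<open>a k = a l\<close> by (metis order.antisym)
  then show ?thesis
    using transfinite_iterates_successor[OF iter s] by simp
qed

lemma monotone_iterates_constant_from_fixpoint:
  fixes a :: "'i::wellorder \<Rightarrow> 'a::order"
  assumes iter: "transfinite_iterates f a0 a" and mono_a: "\<And>k l. k \<le> l \<Longrightarrow> a k \<le> a l"
    and fixpoint: "f (a k) = a k" and "k \<le> m"
  shows "a m = a k"
  using \<open>k \<le> m\<close>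
proof (induction m rule: less_induct)
  case (less m)
  show ?case
  proof (cases "m = k")
    case False
    with less.prems have "k < m" by simp
    then show ?thesis
    proof (cases m rule: wellorder_least_or_successor_or_limit)
      case (2 j)
      then have "j < m" and "\<And>x. j < x \<Longrightarrow> m \<le> x"
        unfolding is_successor_of_def by auto
      then have "k \<le> j"
        using \<open>k < m\<close> by (meson leD not_le)
      with less.IH[OF \<open>j < m\<close>] show ?thesis
        using transfinite_iterates_successor[OF iter 2] fixpoint by simp
    next
      case 3
      note lub = transfinite_iterates_limit[OF iter 3]
      have "a j \<le> a k" if "j < m" for j
        using less.IH[OF that] mono_a[of j k] by (cases "j < k") (auto simp: not_less)
      then have "a m \<le> a k"
        using lub by (auto intro: is_lub_le)
      moreover have "a k \<le> a m"
        using lub \<open>k < m\<close> unfolding is_lub_def by blast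
      ultimately show ?thesis by simp
    qed auto
  qed simp
qed

lemma transfinite_iterates_range_closed_under_fun:
  fixes a :: "'i::wellorder \<Rightarrow> 'a::order"
  assumes iter: "transfinite_iterates f a0 a"
    and fixpoint: "f (a k) = a k" and const: "\<And>m. k \<le> m \<Longrightarrow> a m = a k"
  shows "closed_under_fun f (range a)"
  unfolding closed_under_fun_def
proof
  fix z assume "z \<in> range a"
  then obtain j where z: "z = a j" by blast
  show "f z \<in> range a"
  proof (cases "\<exists>m. j < m")
    case True
    then obtain m where "j < m" by blast
    from transfinite_iterates_successor[OF iter is_successor_of_Least[OF this]] z
    show ?thesis by (metis rangeI)
  next
    case False
    then have "k \<le> j" by (simp add: not_less)
    then show ?thesis using z const[of j] fixpoint by simp
  qed
qed

text \<open>The least index whose iterate bounds \<open>P\<close> is either attained by an element of \<open>P\<close>,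
  or it is a limit index beyond all of them.\<close>

lemma monotone_iterates_range_closed_under_lubs:
  fixes a :: "'i::wellorder \<Rightarrow> 'a::order"
  assumes iter: "transfinite_iterates f a0 a" and mono_a: "\<And>k l. k \<le> l \<Longrightarrow> a k \<le> a l"
    and max: "\<And>j. a j \<le> a k"
  shows "closed_under_lubs (range a)"
  unfolding closed_under_lubs_def
proof (intro allI impI)
  fix P assume P: "P \<noteq> {} \<and> P \<subseteq> range a"
  define m where "m = (LEAST x. \<forall>p\<in>P. p \<le> a x)"
  have "\<forall>p\<in>P. p \<le> a k"
    using P max by blast
  then have ub: "\<forall>p\<in>P. p \<le> a m"
    unfolding m_def by (rule LeastI)
  have least: "m \<le> x" if "\<forall>p\<in>P. p \<le> a x" for x
    unfolding m_def using that by (rule Least_le)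
  have below_P: "\<exists>i. a i \<in> P \<and> j < i" if "j < m" for j
  proof -
    obtain p where "p \<in> P" and "\<not> p \<le> a j"
      using least[of j] \<open>j < m\<close> leD by blast
    moreover obtain i where "p = a i" using P \<open>p \<in> P\<close> by blast
    ultimately show ?thesis using mono_a[of i j] not_le by blast
  qed
  have "a m \<le> v" if v: "\<forall>p\<in>P. p \<le> v" for v
  proof (cases "\<exists>i. a i \<in> P \<and> m \<le> i")
    case True
    then show ?thesis using v mono_a by (blast intro: order.trans)
  next
    case False
    obtain i where "a i \<in> P" using P by blast
    with False have "i < m" by (simp add: not_le)
    have "is_limit m"
    proof (cases m rule: wellorder_least_or_successor_or_limit)
      case (2 j)
      then show ?thesis
        using below_P[of j] False unfolding is_successor_of_def by blast
    qed (use \<open>i < m\<close> in auto)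
    then have "is_lub {a j | j. j < m} (a m)"
      by (rule transfinite_iterates_limit[OF iter])
    moreover have "a j \<le> v" if "j < m" for j
      using below_P[OF that] v mono_a by (blast intro: order.trans less_imp_le)
    ultimately show ?thesis by (auto intro: is_lub_le)
  qed
  then have "is_lub P (a m)"
    using ub unfolding is_lub_def by blast
  then show "\<exists>u. is_lub P u \<and> u \<in> range a" by blast
qed

theorem mainTheorem6:
  fixes f :: "'a::order \<Rightarrow> 'a" and a0 :: 'a
    and a :: "'i::wellorder \<Rightarrow> 'a" and N :: "'a set"
  assumes ind: "strictly_inductive TYPE('a)"
    and large_index: "\<not> (\<exists>g :: 'i \<Rightarrow> 'a. inj g)"
    and iter: "transfinite_iterates f a0 a"
    and N_a0: "a0 \<in> N"
    and N_f: "closed_under_fun f N"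
    and N_lub: "closed_under_lubs N"
    and N_least: "\<And>Z. a0 \<in> Z \<Longrightarrow> closed_under_fun f Z \<Longrightarrow> closed_under_lubs Z \<Longrightarrow> N \<subseteq> Z"
    and mono_a: "\<And>k l. k \<le> l \<Longrightarrow> a k \<le> a l"
  shows "N \<subseteq> range a"
proof -
  obtain k l where "k < l" and "a k = a l"
  proof -
    from large_index obtain x y where "x \<noteq> y" and "a x = a y"
      unfolding inj_def by blast
    then show thesis using that[of x y] that[of y x] by (cases "x < y") (auto simp: neq_iff)
  qed
  have fixpoint: "f (a k) = a k"
    using iter mono_a \<open>k < l\<close> \<open>a k = a l\<close> by (rule monotone_iterates_repeat_imp_fixpoint)
  have const: "a m = a k" if "k \<le> m" for m
    using iter mono_a fixpoint that by (rule monotone_iterates_constant_from_fixpoint)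
  have "a j \<le> a k" for j
    using mono_a[of j k] const[of j] by (cases "j < k") auto
  then show ?thesis
    using N_least transfinite_iterates_start_in_range[OF iter]
      transfinite_iterates_range_closed_under_fun[OF iter fixpoint const]
      monotone_iterates_range_closed_under_lubs[OF iter mono_a]
    by blast
qed

end
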